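(* Let $0<x_L<\mu<x_H<1$, let $F$ be the distribution over posteriors supported on $\{x_L,x_H\}$ with mean $\mu$, and consider a contract implementing $F$ that minimizes the principal's expected transfer among all contracts implementing $F$. Write $\alpha=t(x_L,\theta_1)$, $\beta=t(x_L,\theta_2)$, $\gamma=t(x_H,\theta_1)$, $\delta=t(x_H,\theta_2)$, and let $f$ be the tangent line to $N(\cdot\mid x_L)$ at $x_L$, namely $f(x)=(1-x_L)\alpha+x_L\beta-\kappa c(x_L)+(\beta-\alpha-\kappa c'(x_L))(x-x_L)$. Say the constraint (IC) is the requirement $f(x)\ge v_0-\kappa c(x)$ for all $x\in[0,1]$, and that it binds if equality holds at some $x\in[0,1]$. Then at the optimum one of the following holds: (i) $F$ can be implemented efficiently (and (IC) binds); or (ii) $F$ cannot be implemented efficiently, and either (a) (IC) binds and $\beta=0$; or (b) (IC) binds and $\gamma=0$; or (c) (IC) does not bind and $\gamma=\beta=0$.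
   Context: There are two states $\Theta=\{\theta_1,\theta_2\}$; a belief is identified with $x\in[0,1]$, the probability of $\theta_2$; the prior is $\mu\in(0,1)$. Distributions over posteriors are probability measures on $[0,1]$ with mean $\mu$. Acquiring $F$ costs the agent $\kappa\int c\,dF$, where $\kappa>0$ and $c:[0,1]\to\mathbb{R}_+$ is strictly convex, twice continuously differentiable, bounded on $(0,1)$, $c(\mu)=0$. The agent is risk neutral and protected by limited liability: a contract $(M,t)$ is a compact message set $M$ and a transfer $t:M\times\Theta\to\mathbb{R}_+$ in money. The agent has outside option $v_0\ge0$. Timing: the principal offers $(M,t)$; the agent rejects (getting $v_0$) or accepts, chooses any Bayes-plausible $G$ paying $\kappa\int c\,dG$, privately observes $x\sim G$, then walks away (getting $v_0$) or sends $d\in M$ and receives $t(d,\theta)$ in realized state $\theta$. $N(x\mid d)=(1-x)t(d,\theta_1)+x\,t(d,\theta_2)-\kappa c(x)$. $(M,t)$ implements $F$ if $M=\operatorname{supp}(F)$ and "accept, acquire $F$, send the realized posterior as message" is optimal among all agent strategies (rejecting; or accepting, acquiring any $G$, and at each posterior sending any possibly randomized message or walking away). The principal's cost is the expected transfer. $F$ is implemented efficiently if it is implemented at expected transfer equal to the first-best cost $\kappa\int c\,dF+v_0$. *)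

theory Defs
  imports "HOL-Probability.Probability"
begin

datatype state = Th1 | Th2

definition strictly_convex_on :: "real set \<Rightarrow> (real \<Rightarrow> real) \<Rightarrow> bool" where
  "strictly_convex_on S f \<longleftrightarrow>
     (\<forall>x\<in>S. \<forall>y\<in>S. \<forall>u::real. x \<noteq> y \<and> 0 < u \<and> u < 1 \<longrightarrow>
        f (u * x + (1 - u) * y) < u * f x + (1 - u) * f y)"

definition pay :: "(real \<Rightarrow> state \<Rightarrow> real) \<Rightarrow> real \<Rightarrow> real \<Rightarrow> real" where
  "pay t d x = (1 - x) * t d Th1 + x * t d Th2"

definition bayes_plausible :: "real \<Rightarrow> real measure \<Rightarrow> bool" where
  "bayes_plausible \<mu> G \<longleftrightarrow> prob_space G \<and> sets G = sets borel \<and>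
     (AE x in G. x \<in> {0..1}) \<and> integrable G (\<lambda>x. x) \<and> (\<integral>x. x \<partial>G) = \<mu>"

text \<open>Value at posterior x of a (possibly randomized) report rule: sigma x is a
  distribution over messages (Some d) and walking away (None, worth v0).\<close>
definition report_value ::
  "real \<Rightarrow> (real \<Rightarrow> state \<Rightarrow> real) \<Rightarrow> (real \<Rightarrow> real option pmf) \<Rightarrow> real \<Rightarrow> real" where
  "report_value v0 t \<sigma> x =
     measure_pmf.expectation (\<sigma> x) (\<lambda>r. case r of None \<Rightarrow> v0 | Some d \<Rightarrow> pay t d x)"

definition truthful_payoff ::
  "real \<Rightarrow> (real \<Rightarrow> real) \<Rightarrow> (real \<Rightarrow> state \<Rightarrow> real) \<Rightarrow> real pmf \<Rightarrow> real" where
  "truthful_payoff \<kappa> c t F =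
     measure_pmf.expectation F (\<lambda>x. pay t x x) - \<kappa> * measure_pmf.expectation F c"

definition expected_transfer :: "(real \<Rightarrow> state \<Rightarrow> real) \<Rightarrow> real pmf \<Rightarrow> real" where
  "expected_transfer t F = measure_pmf.expectation F (\<lambda>x. pay t x x)"

definition implements ::
  "real \<Rightarrow> (real \<Rightarrow> real) \<Rightarrow> real \<Rightarrow> real \<Rightarrow> real set \<Rightarrow> (real \<Rightarrow> state \<Rightarrow> real)
     \<Rightarrow> real pmf \<Rightarrow> bool" where
  "implements \<kappa> c v0 \<mu> M t F \<longleftrightarrow>
     M = set_pmf F \<and> (\<forall>d\<in>M. \<forall>\<theta>. 0 \<le> t d \<theta>) \<and>
     v0 \<le> truthful_payoff \<kappa> c t F \<and>
     (\<forall>G \<sigma>. bayes_plausible \<mu> G \<and>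
        (\<forall>x. set_pmf (\<sigma> x) \<subseteq> insert None (Some ` M)) \<and>
        set_integrable G {0..1} (report_value v0 t \<sigma>) \<longrightarrow>
        (LINT x:{0..1}|G. report_value v0 t \<sigma> x) - \<kappa> * (LINT x:{0..1}|G. c x)
          \<le> truthful_payoff \<kappa> c t F)"

definition efficiently_implementable ::
  "real \<Rightarrow> (real \<Rightarrow> real) \<Rightarrow> real \<Rightarrow> real \<Rightarrow> real pmf \<Rightarrow> bool" where
  "efficiently_implementable \<kappa> c v0 \<mu> F \<longleftrightarrow>
     (\<exists>t. implements \<kappa> c v0 \<mu> (set_pmf F) t F \<and>
          expected_transfer t F = \<kappa> * measure_pmf.expectation F c + v0)"

definition two_point :: "real \<Rightarrow> real \<Rightarrow> real \<Rightarrow> real pmf" where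
  "two_point xL xH \<mu> =
     map_pmf (\<lambda>b. if b then xH else xL) (bernoulli_pmf ((\<mu> - xL) / (xH - xL)))"

end

theory Submission
  imports Defs
begin

text \<open>Let L be the chord through the truthful net payoffs N(xL | xL) and N(xH | xH). Deviating to a
  two-point distribution of posteriors with mean \<mu> shows that L lies above the walk-away payoff
  v0 - \<kappa> c and above every N(. | d) on [0, 1]; conversely, any line with these properties that
  meets the truthful payoff at \<mu> certifies implementation. As L touches N(. | xL) at the interior
  point xL, it is the tangent line f of (IC), and (IC) binds iff the convex slack
  s = L - (v0 - \<kappa> c) vanishes somewhere. The agent's rent above first best is s(\<mu>). If it is
  positive and w(x) = (1 - x) w0 + x w1 is an affine minorant of s with w(\<mu>) > 0, lowering all
  transfers in state \<theta>1 by e w0 and in state \<theta>2 by e w1, for small e > 0, still implements F at a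
  lower cost, unless limited liability blocks it: \<gamma> (the smaller transfer in \<theta>1) is zero and
  w0 > 0, or \<beta> (the smaller one in \<theta>2) is zero and w1 > 0. The tangent of s at \<mu> rules out
  \<beta>, \<gamma> > 0; if (IC) is slack, the tangent at \<mu> or at a critical point of s between xL and xH
  gives a minorant with w0 \<le> 0 or w1 \<le> 0 that rules out the remaining case.\<close>

definition message_value :: "real \<Rightarrow> (real \<Rightarrow> state \<Rightarrow> real) \<Rightarrow> real option \<Rightarrow> real \<Rightarrow> real" where
  "message_value v0 t r x = (case r of None \<Rightarrow> v0 | Some d \<Rightarrow> pay t d x)"

lemma message_value_borel_measurable [measurable]: "message_value v0 t r \<in> borel_measurable borel"
  by (cases r) (simp_all add: message_value_def[abs_def] pay_def)

lemma expectation_two_point: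
  assumes "xL < \<mu>" "\<mu> < xH"
  shows "measure_pmf.expectation (two_point xL xH \<mu>) h =
           ((xH - \<mu>) * h xL + (\<mu> - xL) * h xH) / (xH - xL)"
proof -
  define p where "p = (\<mu> - xL) / (xH - xL)"
  have "0 \<le> p" "p \<le> 1"
    using assms by (auto simp: p_def divide_simps)
  then have "measure_pmf.expectation (two_point xL xH \<mu>) h = (1 - p) * h xL + p * h xH"
    unfolding two_point_def p_def[symmetric] by (simp add: algebra_simps)
  then show ?thesis
    using assms by (simp add: p_def divide_simps)
qed

lemma borel_measurable_indicator_mult_continuous_on_open_interval:
  fixes c :: "real \<Rightarrow> real"
  assumes "a < b" "continuous_on {a<..<b} c"
  shows "(\<lambda>x. indicator {a..b} x * c x) \<in> borel_measurable borel"
proof -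
  have "(\<lambda>x. indicator {a<..<b} x *\<^sub>R c x) \<in> borel_measurable borel"
    by (rule borel_measurable_continuous_on_indicator) (simp_all add: assms(2))
  moreover have "(\<lambda>x. indicator {a..b} x * c x) =
      (\<lambda>x. indicator {a<..<b} x *\<^sub>R c x + indicator {a} x * c a + indicator {b} x * c b)"
    using assms(1) by (auto simp: indicator_def fun_eq_iff)
  ultimately show ?thesis by simp
qed

lemma strictly_convex_on_imp_convex_on:
  assumes "strictly_convex_on S c" "convex S"
  shows "convex_on S c"
proof (rule convex_onI)
  fix u x y :: real assume u: "0 < u" "u < 1" and xy: "x \<in> S" "y \<in> S"
  show "c ((1 - u) *\<^sub>R x + u *\<^sub>R y) \<le> (1 - u) * c x + u * c y"
  proof (cases "x = y")
    case False
    then have "c ((1 - u) * x + (1 - (1 - u)) * y) < (1 - u) * c x + (1 - (1 - u)) * c y"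
      using assms(1) u xy unfolding strictly_convex_on_def by (metis diff_gt_0_iff_gt diff_less_eq less_add_same_cancel1)
    then show ?thesis by simp
  qed (simp add: algebra_simps)
qed (fact assms(2))

lemma
  fixes y1 y2 q :: real
  assumes y: "y1 \<in> {0..1}" "y2 \<in> {0..1}" and q: "0 \<le> q" "q \<le> 1"
    and mean: "(1 - q) * y1 + q * y2 = \<mu>"
  defines "G \<equiv> distr (measure_pmf (bernoulli_pmf q)) borel (\<lambda>b. if b then y2 else y1)"
  shows bayes_plausible_two_point_distr: "bayes_plausible \<mu> G"
    and set_integrable_two_point_distr:
      "h \<in> borel_measurable borel \<Longrightarrow> set_integrable G {0..1} h"
    and set_integral_two_point_distr:
      "h \<in> borel_measurable borel \<Longrightarrow> (LINT x:{0..1}|G. h x) = (1 - q) * h y1 + q * h y2"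
proof -
  define g where "g = (\<lambda>b::bool. if b then y2 else y1)"
  have g_meas [measurable]: "g \<in> measurable (measure_pmf (bernoulli_pmf q)) borel" by simp
  have integrable: "integrable (measure_pmf (bernoulli_pmf q)) f" for f :: "bool \<Rightarrow> real"
    by (rule integrable_measure_pmf_finite) (rule finite_subset[of _ UNIV], auto)
  show "bayes_plausible \<mu> G"
    unfolding bayes_plausible_def G_def g_def[symmetric]
  proof (intro conjI)
    show "prob_space (distr (measure_pmf (bernoulli_pmf q)) borel g)"
      by (rule measure_pmf.prob_space_distr) simp
    show "AE x in distr (measure_pmf (bernoulli_pmf q)) borel g. x \<in> {0..1}"
      by (subst AE_distr_iff) (use y in \<open>auto simp: g_def\<close>)
    show "integrable (distr (measure_pmf (bernoulli_pmf q)) borel g) (\<lambda>x. x)"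
      by (subst integrable_distr_eq) (auto intro: integrable)
    show "(\<integral>x. x \<partial>distr (measure_pmf (bernoulli_pmf q)) borel g) = \<mu>"
      by (subst integral_distr) (use q mean in \<open>auto simp: g_def algebra_simps\<close>)
  qed simp
  assume [measurable]: "h \<in> borel_measurable borel"
  show "set_integrable G {0..1} h"
    unfolding set_integrable_def G_def g_def[symmetric]
    by (subst integrable_distr_eq) (auto intro: integrable)
  show "(LINT x:{0..1}|G. h x) = (1 - q) * h y1 + q * h y2"
    unfolding set_lebesgue_integral_def G_def g_def[symmetric]
    by (subst integral_distr) (use q y in \<open>auto simp: g_def\<close>)
qed

lemma implements_two_point_deviation:
  assumes impl: "implements \<kappa> c v0 \<mu> M t F"
    and c_meas: "(\<lambda>x. indicator {0..1} x * c x) \<in> borel_measurable borel"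
    and y: "y1 \<in> {0..1}" "y2 \<in> {0..1}" "y1 \<noteq> y2" and q: "0 \<le> q" "q \<le> 1"
    and mean: "(1 - q) * y1 + q * y2 = \<mu>"
    and r: "r1 \<in> insert None (Some ` M)" "r2 \<in> insert None (Some ` M)"
  shows "(1 - q) * (message_value v0 t r1 y1 - \<kappa> * c y1) +
           q * (message_value v0 t r2 y2 - \<kappa> * c y2) \<le> truthful_payoff \<kappa> c t F"
proof -
  define G where "G = distr (measure_pmf (bernoulli_pmf q)) borel (\<lambda>b. if b then y2 else y1)"
  define \<sigma> where "\<sigma> = (\<lambda>y::real. if y = y2 then return_pmf r2 else return_pmf r1)"
  have rv: "report_value v0 t \<sigma> = (\<lambda>y. if y = y2 then message_value v0 t r2 y else message_value v0 t r1 y)"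
    by (auto simp: report_value_def \<sigma>_def message_value_def fun_eq_iff)
  have rv_meas: "report_value v0 t \<sigma> \<in> borel_measurable borel"
    unfolding rv by measurable
  have "(LINT x:{0..1}|G. report_value v0 t \<sigma> x) - \<kappa> * (LINT x:{0..1}|G. c x) \<le> truthful_payoff \<kappa> c t F"
    using impl r unfolding implements_def
    using bayes_plausible_two_point_distr[OF y(1,2) q mean]
      set_integrable_two_point_distr[OF y(1,2) q mean rv_meas]
    by (auto simp: \<sigma>_def G_def)
  moreover have "(LINT x:{0..1}|G. report_value v0 t \<sigma> x) =
      (1 - q) * message_value v0 t r1 y1 + q * message_value v0 t r2 y2"
    unfolding G_def by (subst set_integral_two_point_distr[OF y(1,2) q mean rv_meas]) (use y in \<open>simp add: rv\<close>)
  moreover have "(LINT x:{0..1}|G. c x) = (1 - q) * c y1 + q * c y2"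
  proof -
    have "(LINT x:{0..1}|G. c x) = (LINT x:{0..1}|G. indicator {0..1} x * c x)"
      unfolding set_lebesgue_integral_def by (rule Bochner_Integration.integral_cong) (auto simp: indicator_def)
    also have "\<dots> = (1 - q) * c y1 + q * c y2"
      unfolding G_def by (subst set_integral_two_point_distr[OF y(1,2) q mean c_meas]) (use y in simp)
    finally show ?thesis .
  qed
  ultimately show ?thesis by (simp add: algebra_simps)
qed

lemma
  assumes "bayes_plausible \<mu> G"
  shows set_integrable_affine_bayes_plausible: "set_integrable G {0..1} (\<lambda>x. a + b * x)"
    and set_integral_affine_bayes_plausible: "(LINT x:{0..1}|G. a + b * x) = a + b * \<mu>"
proof -
  interpret prob_space G using assms by (simp add: bayes_plausible_def)
  have sets: "sets G = sets borel" and AE: "AE x in G. x \<in> {0..1}"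
    and int: "integrable G (\<lambda>x. x)" and mean: "(\<integral>x. x \<partial>G) = \<mu>"
    using assms by (auto simp: bayes_plausible_def)
  have int_affine: "integrable G (\<lambda>x. a + b * x)" using int by simp
  show "set_integrable G {0..1} (\<lambda>x. a + b * x)"
    unfolding set_integrable_def by (rule integrable_mult_indicator) (use int_affine sets in auto)
  then have "(LINT x:{0..1}|G. a + b * x) = (\<integral>x. a + b * x \<partial>G)"
    unfolding set_integrable_def set_lebesgue_integral_def
    by (intro integral_cong_AE) (use AE int_affine in \<open>auto intro: borel_measurable_integrable\<close>)
  also have "\<dots> = a + b * \<mu>" using int mean by (simp add: prob_space)
  finally show "(LINT x:{0..1}|G. a + b * x) = a + b * \<mu>" .
qed

lemma set_integrable_bounded_bayes_plausible:
  fixes c :: "real \<Rightarrow> real"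
  assumes "bayes_plausible \<mu> G"
    and meas: "(\<lambda>x. indicator {0..1} x * c x) \<in> borel_measurable borel"
    and bound: "\<forall>x\<in>{0..1}. \<bar>c x\<bar> \<le> K"
  shows "set_integrable G {0..1} c"
proof -
  interpret prob_space G using assms by (simp add: bayes_plausible_def)
  have "sets G = sets borel" using assms by (simp add: bayes_plausible_def)
  then have "(\<lambda>x. indicator {0..1} x * c x) \<in> borel_measurable G"
    using meas measurable_cong_sets by blast
  moreover have "AE x in G. norm (indicator {0..1} x * c x) \<le> K"
    using bound by (intro AE_I2) (auto simp: indicator_def intro: order.trans[OF _ bound[rule_format, of 1]])
  ultimately show ?thesis
    unfolding set_integrable_def by (simp add: integrable_const_bound)
qed

lemma report_value_le:
  assumes "finite M" "set_pmf (\<sigma> x) \<subseteq> insert None (Some ` M)"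
    and "v0 \<le> l" "\<forall>d\<in>M. pay t d x \<le> l"
  shows "report_value v0 t \<sigma> x \<le> l"
  unfolding report_value_def
proof (rule measure_pmf.integral_le_const)
  have "finite (set_pmf (\<sigma> x))" using assms(1,2) finite_subset by blast
  then show "integrable (measure_pmf (\<sigma> x)) (\<lambda>r. case r of None \<Rightarrow> v0 | Some d \<Rightarrow> pay t d x)"
    by (rule integrable_measure_pmf_finite)
  show "AE r in measure_pmf (\<sigma> x). (case r of None \<Rightarrow> v0 | Some d \<Rightarrow> pay t d x) \<le> l"
    using assms(2-4) by (intro AE_pmfI) (auto split: option.split)
qed

lemma implements_of_supporting_line:
  fixes t :: "real \<Rightarrow> state \<Rightarrow> real" and c :: "real \<Rightarrow> real"
  assumes "M = set_pmf F" "finite M" "\<forall>d\<in>M. \<forall>\<theta>. 0 \<le> t d \<theta>"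
    and above: "\<forall>x\<in>{0..1}. v0 - \<kappa> * c x \<le> a + b * x \<and> (\<forall>d\<in>M. pay t d x - \<kappa> * c x \<le> a + b * x)"
    and truthful: "truthful_payoff \<kappa> c t F = a + b * \<mu>" and "v0 \<le> a + b * \<mu>"
    and c_meas: "(\<lambda>x. indicator {0..1} x * c x) \<in> borel_measurable borel"
    and c_bound: "\<forall>x\<in>{0..1}. \<bar>c x\<bar> \<le> K"
  shows "implements \<kappa> c v0 \<mu> M t F"
  unfolding implements_def
proof (intro conjI allI impI)
  show "v0 \<le> truthful_payoff \<kappa> c t F" using assms(5,6) by simp
  fix G \<sigma>
  assume "bayes_plausible \<mu> G \<and> (\<forall>x. set_pmf (\<sigma> x) \<subseteq> insert None (Some ` M)) \<and>
    set_integrable G {0..1} (report_value v0 t \<sigma>)"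
  then have G: "bayes_plausible \<mu> G" and \<sigma>: "\<And>x. set_pmf (\<sigma> x) \<subseteq> insert None (Some ` M)"
    and int_report: "set_integrable G {0..1} (report_value v0 t \<sigma>)" by auto
  have int_c: "set_integrable G {0..1} c"
    by (rule set_integrable_bounded_bayes_plausible[OF G c_meas c_bound])
  have int_bound: "set_integrable G {0..1} (\<lambda>x. (a + b * x) + \<kappa> * c x)"
    using set_integral_add(1)[OF set_integrable_affine_bayes_plausible[OF G]] int_c by simp
  have "report_value v0 t \<sigma> x \<le> (a + b * x) + \<kappa> * c x" if "x \<in> {0..1}" for x
    by (rule report_value_le[OF assms(2) \<sigma>]) (use above[rule_format, OF that] in \<open>auto simp: algebra_simps\<close>)
  then have "(LINT x:{0..1}|G. report_value v0 t \<sigma> x) \<le> (LINT x:{0..1}|G. (a + b * x) + \<kappa> * c x)"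
    by (rule set_integral_mono[OF int_report int_bound])
  also have "\<dots> = a + b * \<mu> + \<kappa> * (LINT x:{0..1}|G. c x)"
    using set_integrable_affine_bayes_plausible[OF G] int_c
    by (simp add: set_integral_add set_integral_mult_right set_integral_affine_bayes_plausible[OF G])
  finally show "(LINT x:{0..1}|G. report_value v0 t \<sigma> x) - \<kappa> * (LINT x:{0..1}|G. c x) \<le> truthful_payoff \<kappa> c t F"
    using truthful by simp
qed (use assms in auto)

lemma slope_eq_deriv_if_line_above:
  fixes g :: "real \<Rightarrow> real"
  assumes deriv: "(g has_real_derivative g') (at x0)" and "a < x0" "x0 < b"
    and above: "\<forall>y\<in>{a..b}. g y \<le> g x0 + m * (y - x0)"
  shows "m = g'"
proof -
  define \<phi> where "\<phi> y = g x0 + m * (y - x0) - g y" for y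
  have D: "(\<phi> has_real_derivative m - g') (at x0)"
    unfolding \<phi>_def using deriv by (auto intro!: derivative_eq_intros)
  have min: "\<forall>y. \<bar>x0 - y\<bar> < min (x0 - a) (b - x0) \<longrightarrow> \<phi> x0 \<le> \<phi> y"
  proof (intro allI impI)
    fix y assume "\<bar>x0 - y\<bar> < min (x0 - a) (b - x0)"
    then have "y \<in> {a..b}" by auto
    then show "\<phi> x0 \<le> \<phi> y" using above by (simp add: \<phi>_def)
  qed
  have "m - g' = 0"
    by (rule DERIV_local_min[OF D _ min]) (use assms(2,3) in simp)
  then show ?thesis by simp
qed

lemma coefficients_ordered_if_lines_cross:
  fixes xL xH \<alpha> \<beta> \<gamma> \<delta> :: real
  assumes "0 \<le> xL" "xL < xH" "xH \<le> 1"
    and at_xL: "(1 - xL) * \<gamma> + xL * \<delta> \<le> (1 - xL) * \<alpha> + xL * \<beta>"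
    and at_xH: "(1 - xH) * \<alpha> + xH * \<beta> \<le> (1 - xH) * \<gamma> + xH * \<delta>"
  shows "\<gamma> \<le> \<alpha>" "\<beta> \<le> \<delta>"
proof -
  have "(xH - xL) * ((\<beta> - \<delta>) - (\<alpha> - \<gamma>)) \<le> 0"
    using at_xL at_xH by (simp add: algebra_simps)
  then have slope: "(\<beta> - \<delta>) - (\<alpha> - \<gamma>) \<le> 0"
    using assms(2) by (simp add: mult_le_0_iff)
  have "\<alpha> - \<gamma> = ((1 - xL) * (\<alpha> - \<gamma>) + xL * (\<beta> - \<delta>)) - xL * ((\<beta> - \<delta>) - (\<alpha> - \<gamma>))"
    by (simp add: algebra_simps)
  moreover have "0 \<le> (1 - xL) * (\<alpha> - \<gamma>) + xL * (\<beta> - \<delta>)"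
    using at_xL by (simp add: algebra_simps)
  moreover have "xL * ((\<beta> - \<delta>) - (\<alpha> - \<gamma>)) \<le> 0"
    using slope assms(1) by (simp add: mult_nonneg_nonpos)
  ultimately show "\<gamma> \<le> \<alpha>" by linarith
  have "\<beta> - \<delta> = ((1 - xH) * (\<alpha> - \<gamma>) + xH * (\<beta> - \<delta>)) + (1 - xH) * ((\<beta> - \<delta>) - (\<alpha> - \<gamma>))"
    by (simp add: algebra_simps)
  moreover have "(1 - xH) * (\<alpha> - \<gamma>) + xH * (\<beta> - \<delta>) \<le> 0"
    using at_xH by (simp add: algebra_simps)
  moreover have "(1 - xH) * ((\<beta> - \<delta>) - (\<alpha> - \<gamma>)) \<le> 0"
    using slope assms(3) by (simp add: mult_nonneg_nonpos)
  ultimately show "\<beta> \<le> \<delta>" by linarith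
qed

lemma small_multiple_le:
  fixes a w :: real
  assumes "0 \<le> a" "w \<le> 0 \<or> 0 < a"
  obtains e where "0 < e" "\<And>e'. 0 \<le> e' \<Longrightarrow> e' \<le> e \<Longrightarrow> e' * w \<le> a"
proof (cases "w \<le> 0")
  case True
  then show ?thesis
    using assms(1) that[of 1] by (meson mult_nonneg_nonpos order_trans zero_less_one)
next
  case False
  then have "0 < a / w" using assms by simp
  moreover have "e' * w \<le> a" if "e' \<le> a / w" for e'
    using that False by (simp add: pos_le_divide_eq)
  ultimately show ?thesis using that by blast
qed

lemma affine_minorant_nonpos_at_0:
  fixes s s' :: "real \<Rightarrow> real"
  assumes tangent: "\<And>q y. q \<in> {0<..<1} \<Longrightarrow> y \<in> {0..1} \<Longrightarrow> s q + s' q * (y - q) \<le> s y"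
    and \<mu>: "0 < \<mu>" "\<mu> \<le> b" "b < 1"
    and cont: "continuous_on {\<mu>..b} s'" and s'_b: "0 \<le> s' b"
    and pos: "\<forall>x\<in>{\<mu>..b}. 0 < s x"
  obtains w0 w1 where "w0 \<le> 0" "\<forall>x\<in>{0..1}. (1 - x) * w0 + x * w1 \<le> s x"
    "0 < (1 - \<mu>) * w0 + \<mu> * w1"
proof (cases "0 \<le> s' \<mu>")
  case True
  define T0 where "T0 = s \<mu> - s' \<mu> * \<mu>"
  define T1 where "T1 = s \<mu> + s' \<mu> * (1 - \<mu>)"
  have s\<mu>: "0 < s \<mu>" using pos \<mu> by auto
  have "0 \<le> s' \<mu> * (1 - \<mu>)" using True \<mu> by simp
  then have T1: "0 < T1" using s\<mu> by (simp add: T1_def)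
  show ?thesis
  proof (rule that[of "min T0 0" T1])
    show "\<forall>x\<in>{0..1}. (1 - x) * min T0 0 + x * T1 \<le> s x"
    proof
      fix x :: real assume x: "x \<in> {0..1}"
      have "(1 - x) * min T0 0 \<le> (1 - x) * T0" using x by (intro mult_left_mono) auto
      moreover have "(1 - x) * T0 + x * T1 = s \<mu> + s' \<mu> * (x - \<mu>)"
        by (simp add: T0_def T1_def algebra_simps)
      moreover have "s \<mu> + s' \<mu> * (x - \<mu>) \<le> s x" using tangent \<mu> x by auto
      ultimately show "(1 - x) * min T0 0 + x * T1 \<le> s x" by linarith
    qed
    have "(1 - \<mu>) * T0 + \<mu> * T1 = s \<mu>" by (simp add: T0_def T1_def algebra_simps)
    then show "0 < (1 - \<mu>) * min T0 0 + \<mu> * T1"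
      using s\<mu> T1 \<mu> by (cases "T0 \<le> 0") (simp_all add: min_def)
  qed simp
next
  case False
  then obtain q where q: "\<mu> \<le> q" "q \<le> b" "s' q = 0"
    using IVT'[of s' \<mu> 0 b] cont s'_b \<mu> by auto
  have sq: "0 < s q" using pos q by auto
  show ?thesis
  proof (rule that[of 0 "s q"])
    show "\<forall>x\<in>{0..1}. (1 - x) * 0 + x * s q \<le> s x"
    proof
      fix x :: real assume x: "x \<in> {0..1}"
      have "x * s q \<le> s q" using x sq by (simp add: mult_left_le_one_le)
      also have "\<dots> \<le> s x" using tangent[of q x] q \<mu> x by simp
      finally show "(1 - x) * 0 + x * s q \<le> s x" by simp
    qed
  qed (use sq \<mu> in simp_all)
qed

lemma affine_minorant_nonpos_at_1:
  fixes s s' :: "real \<Rightarrow> real"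
  assumes tangent: "\<And>q y. q \<in> {0<..<1} \<Longrightarrow> y \<in> {0..1} \<Longrightarrow> s q + s' q * (y - q) \<le> s y"
    and \<mu>: "0 < a" "a \<le> \<mu>" "\<mu> < 1"
    and cont: "continuous_on {a..\<mu>} s'" and s'_a: "s' a \<le> 0"
    and pos: "\<forall>x\<in>{a..\<mu>}. 0 < s x"
  obtains w0 w1 where "w1 \<le> 0" "\<forall>x\<in>{0..1}. (1 - x) * w0 + x * w1 \<le> s x"
    "0 < (1 - \<mu>) * w0 + \<mu> * w1"
proof -
  have tangent': "s (1 - q) + - s' (1 - q) * (y - q) \<le> s (1 - y)"
    if "q \<in> {0<..<1}" "y \<in> {0..1}" for q y
    using tangent[of "1 - q" "1 - y"] that by (simp add: algebra_simps)
  have cont': "continuous_on {1 - \<mu>..1 - a} (\<lambda>q. - s' (1 - q))"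
    by (intro continuous_intros continuous_on_compose2[OF cont]) auto
  have pos': "\<forall>x\<in>{1 - \<mu>..1 - a}. 0 < s (1 - x)"
    using pos by (auto simp: algebra_simps)
  obtain v0 v1 where v: "v0 \<le> 0" "\<forall>x\<in>{0..1}. (1 - x) * v0 + x * v1 \<le> s (1 - x)"
    "0 < (1 - (1 - \<mu>)) * v0 + (1 - \<mu>) * v1"
    by (rule affine_minorant_nonpos_at_0[of "\<lambda>y. s (1 - y)" "\<lambda>q. - s' (1 - q)" "1 - \<mu>" "1 - a"])
      (use tangent' \<mu> cont' s'_a pos' in auto)
  show ?thesis
  proof (rule that[of v0 v1])
    show "\<forall>x\<in>{0..1}. (1 - x) * v1 + x * v0 \<le> s x"
      using v(2) by (auto dest: bspec[of _ _ "1 - x" for x] simp: algebra_simps)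
  qed (use v in \<open>simp_all add: algebra_simps\<close>)
qed

locale two_point_contract =
  fixes \<kappa> v0 \<mu> xL xH :: real and c :: "real \<Rightarrow> real" and t :: "real \<Rightarrow> state \<Rightarrow> real"
  assumes order: "0 < xL" "xL < \<mu>" "\<mu> < xH" "xH < 1"
    and c_continuous: "continuous_on {0<..<1} c"
    and c_bounded: "bounded (c ` {0<..<1})"
    and c_prior: "c \<mu> = 0"
    and implements: "implements \<kappa> c v0 \<mu> {xL, xH} t (two_point xL xH \<mu>)"
begin

abbreviation "F \<equiv> two_point xL xH \<mu>"

definition net :: "real \<Rightarrow> real \<Rightarrow> real" where
  "net d x = pay t d x - \<kappa> * c x"

definition chord_slope :: real where
  "chord_slope = (net xH xH - net xL xL) / (xH - xL)"

definition chord :: "real \<Rightarrow> real" where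
  "chord x = net xL xL + chord_slope * (x - xL)"

definition slack :: "real \<Rightarrow> real" where
  "slack x = chord x - (v0 - \<kappa> * c x)"

lemma set_pmf_F: "set_pmf F = {xL, xH}"
  using implements by (simp add: implements_def)

lemma transfers_nonneg: "d \<in> {xL, xH} \<Longrightarrow> 0 \<le> t d \<theta>"
  using implements by (auto simp: implements_def)

lemma c_measurable: "(\<lambda>x. indicator {0..1} x * c x) \<in> borel_measurable borel"
  by (rule borel_measurable_indicator_mult_continuous_on_open_interval) (simp_all add: c_continuous)

lemma c_bounded_closed: obtains K where "\<forall>x\<in>{0..1}. \<bar>c x\<bar> \<le> K"
proof -
  obtain B where B: "\<forall>x\<in>{0<..<1}. \<bar>c x\<bar> \<le> B"
    using c_bounded unfolding bounded_real by auto
  have "\<bar>c x\<bar> \<le> max B (max \<bar>c 0\<bar> \<bar>c 1\<bar>)" if "x \<in> {0..1}" for x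
    using that B by (cases "x = 0 \<or> x = 1") (auto intro: order.trans[OF _ max.cobounded1])
  then show ?thesis using that by blast
qed

lemma chord_xL: "chord xL = net xL xL"
  by (simp add: chord_def)

lemma chord_xH: "chord xH = net xH xH"
  using order by (simp add: chord_def chord_slope_def)

lemma chord_convex_combination: "chord ((1 - q) * y1 + q * y2) = (1 - q) * chord y1 + q * chord y2"
  by (simp add: chord_def algebra_simps)

lemma expectation_F: "measure_pmf.expectation F h = ((xH - \<mu>) * h xL + (\<mu> - xL) * h xH) / (xH - xL)"
  using order by (intro expectation_two_point) auto

lemma truthful_payoff_eq_chord: "truthful_payoff \<kappa> c t F = chord \<mu>"
proof -
  have "truthful_payoff \<kappa> c t F = ((xH - \<mu>) * chord xL + (\<mu> - xL) * chord xH) / (xH - xL)"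
    unfolding truthful_payoff_def expectation_F chord_xL chord_xH net_def
    using order by (simp add: divide_simps) (simp add: algebra_simps)
  also have "\<dots> = chord \<mu>"
    using order by (simp add: chord_def divide_simps) (simp add: algebra_simps)
  finally show ?thesis .
qed

lemma expected_transfer_eq_chord: "expected_transfer t F = chord \<mu> + \<kappa> * measure_pmf.expectation F c"
  using truthful_payoff_eq_chord by (simp add: expected_transfer_def truthful_payoff_def)

lemma message_value_truthful: "d \<in> {xL, xH} \<Longrightarrow> message_value v0 t (Some d) d - \<kappa> * c d = chord d"
  by (auto simp: message_value_def chord_xL chord_xH net_def)

lemma message_value_le_chord:
  assumes x: "x \<in> {0..1}" and r: "r \<in> insert None (Some ` {xL, xH})"
  shows "message_value v0 t r x - \<kappa> * c x \<le> chord x"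
proof (cases "x \<le> \<mu>")
  case True
  define q where "q = (\<mu> - x) / (xH - x)"
  have q: "0 \<le> q" "q < 1"
    using True order by (simp_all add: q_def)
  have "(1 - q) * x + q * xH = x + q * (xH - x)" by (simp add: algebra_simps)
  then have mean: "(1 - q) * x + q * xH = \<mu>"
    using True order by (simp add: q_def)
  have "(1 - q) * (message_value v0 t r x - \<kappa> * c x) +
      q * (message_value v0 t (Some xH) xH - \<kappa> * c xH) \<le> truthful_payoff \<kappa> c t F"
    by (rule implements_two_point_deviation[OF implements c_measurable])
      (use x r q mean True order in auto)
  then have "(1 - q) * (message_value v0 t r x - \<kappa> * c x) \<le> (1 - q) * chord x"
    using chord_convex_combination[of q x xH] mean
    by (simp add: message_value_truthful truthful_payoff_eq_chord)
  then show ?thesis using q by simp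
next
  case False
  define q where "q = (\<mu> - xL) / (x - xL)"
  have q: "0 < q" "q \<le> 1"
    using False order x by (simp_all add: q_def)
  have "(1 - q) * xL + q * x = xL + q * (x - xL)" by (simp add: algebra_simps)
  then have mean: "(1 - q) * xL + q * x = \<mu>"
    using False order by (simp add: q_def)
  have "(1 - q) * (message_value v0 t (Some xL) xL - \<kappa> * c xL) +
      q * (message_value v0 t r x - \<kappa> * c x) \<le> truthful_payoff \<kappa> c t F"
    by (rule implements_two_point_deviation[OF implements c_measurable])
      (use x r q mean False order in auto)
  then have "q * (message_value v0 t r x - \<kappa> * c x) \<le> q * chord x"
    using chord_convex_combination[of q xL x] mean
    by (simp add: message_value_truthful truthful_payoff_eq_chord)
  then show ?thesis using q by simp
qed

lemma slack_prior: "slack \<mu> = chord \<mu> - v0"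
  using c_prior by (simp add: slack_def)

lemma slack_nonneg: "x \<in> {0..1} \<Longrightarrow> 0 \<le> slack x"
  using message_value_le_chord[of x None] by (simp add: slack_def message_value_def)

lemma net_le_chord: "d \<in> {xL, xH} \<Longrightarrow> x \<in> {0..1} \<Longrightarrow> net d x \<le> chord x"
  using message_value_le_chord[of x "Some d"] by (simp add: net_def message_value_def)

lemma transfers_ordered: "t xH Th1 \<le> t xL Th1" "t xL Th2 \<le> t xH Th2"
proof -
  have "net xH xL \<le> net xL xL" "net xL xH \<le> net xH xH"
    using net_le_chord[of xH xL] net_le_chord[of xL xH] order by (simp_all add: chord_xL chord_xH)
  then have at_xL: "(1 - xL) * t xH Th1 + xL * t xH Th2 \<le> (1 - xL) * t xL Th1 + xL * t xL Th2"
    and at_xH: "(1 - xH) * t xL Th1 + xH * t xL Th2 \<le> (1 - xH) * t xH Th1 + xH * t xH Th2"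
    by (simp_all add: net_def pay_def)
  show "t xH Th1 \<le> t xL Th1" "t xL Th2 \<le> t xH Th2"
    using coefficients_ordered_if_lines_cross[OF _ _ _ at_xL at_xH] order by simp_all
qed

lemma
  fixes w0 w1 :: real
  defines "t' \<equiv> \<lambda>d \<theta>. t d \<theta> - (case \<theta> of Th1 \<Rightarrow> w0 | Th2 \<Rightarrow> w1)"
  assumes minorant: "\<forall>x\<in>{0..1}. (1 - x) * w0 + x * w1 \<le> slack x"
    and w0: "w0 \<le> t xH Th1" and w1: "w1 \<le> t xL Th2"
  shows implements_lowered: "implements \<kappa> c v0 \<mu> {xL, xH} t' F"
    and expected_transfer_lowered:
      "expected_transfer t' F = expected_transfer t F - ((1 - \<mu>) * w0 + \<mu> * w1)"
proof -
  define W where "W x = (1 - x) * w0 + x * w1" for x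
  have pay': "pay t' d x = pay t d x - W x" for d x
    by (simp add: t'_def pay_def W_def algebra_simps)
  show transfer: "expected_transfer t' F = expected_transfer t F - ((1 - \<mu>) * w0 + \<mu> * w1)"
    unfolding expected_transfer_def expectation_F pay' W_def
    using order by (simp add: divide_simps) (simp add: algebra_simps)
  obtain K where K: "\<forall>x\<in>{0..1}. \<bar>c x\<bar> \<le> K" by (rule c_bounded_closed)
  define a where "a = net xL xL - chord_slope * xL - w0"
  define b where "b = chord_slope + w0 - w1"
  have line: "a + b * x = chord x - W x" for x
    by (simp add: a_def b_def chord_def W_def algebra_simps)
  show "implements \<kappa> c v0 \<mu> {xL, xH} t' F"
  proof (rule implements_of_supporting_line[where a = a and b = b, OF _ _ _ _ _ _ c_measurable K], unfold line)
    show "{xL, xH} = set_pmf F" by (simp add: set_pmf_F)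
    show "\<forall>d\<in>{xL, xH}. \<forall>\<theta>. 0 \<le> t' d \<theta>"
      using w0 w1 transfers_ordered by (auto simp: t'_def split: state.split)
    show "\<forall>x\<in>{0..1}. v0 - \<kappa> * c x \<le> chord x - W x \<and>
        (\<forall>d\<in>{xL, xH}. pay t' d x - \<kappa> * c x \<le> chord x - W x)"
      using minorant net_le_chord by (auto simp: W_def slack_def pay' net_def)
    show "truthful_payoff \<kappa> c t' F = chord \<mu> - W \<mu>"
      using transfer truthful_payoff_eq_chord
      by (simp add: truthful_payoff_def expected_transfer_def W_def)
    show "v0 \<le> chord \<mu> - W \<mu>"
      using minorant[rule_format, of \<mu>] order c_prior by (simp add: W_def slack_def)
  qed simp
qed

end

locale optimal_two_point_contract = two_point_contract +
  fixes c' :: "real \<Rightarrow> real"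
  assumes kappa_pos: "0 < \<kappa>"
    and c_deriv: "\<forall>x\<in>{0<..<1}. (c has_real_derivative c' x) (at x)"
    and c'_continuous: "continuous_on {0<..<1} c'"
    and c_convex: "convex_on {0..1} c"
    and optimal: "\<forall>t'. implements \<kappa> c v0 \<mu> {xL, xH} t' F \<longrightarrow>
                    expected_transfer t F \<le> expected_transfer t' F"
begin

lemma efficiently_implementable_iff: "efficiently_implementable \<kappa> c v0 \<mu> F \<longleftrightarrow> chord \<mu> = v0"
proof
  assume "efficiently_implementable \<kappa> c v0 \<mu> F"
  then obtain t' where "implements \<kappa> c v0 \<mu> {xL, xH} t' F"
    and t': "expected_transfer t' F = \<kappa> * measure_pmf.expectation F c + v0"
    unfolding efficiently_implementable_def set_pmf_F by blast
  then have "expected_transfer t F \<le> expected_transfer t' F"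
    using optimal by blast
  then have "chord \<mu> \<le> v0"
    using expected_transfer_eq_chord t' by simp
  moreover have "v0 \<le> chord \<mu>"
    using slack_nonneg[of \<mu>] slack_prior order by simp
  ultimately show "chord \<mu> = v0" by simp
next
  assume "chord \<mu> = v0"
  then show "efficiently_implementable \<kappa> c v0 \<mu> F"
    unfolding efficiently_implementable_def set_pmf_F
    using implements expected_transfer_eq_chord by auto
qed

lemma chord_slope_eq_deriv:
  assumes d: "d \<in> {xL, xH}"
  shows "chord_slope = t d Th2 - t d Th1 - \<kappa> * c' d"
proof (rule slope_eq_deriv_if_line_above)
  have "d \<in> {0<..<1}" using d order by auto
  then show "(net d has_real_derivative t d Th2 - t d Th1 - \<kappa> * c' d) (at d)"
    unfolding net_def pay_def using c_deriv by (auto intro!: derivative_eq_intros)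
  have "chord y = chord d + chord_slope * (y - d)" for y
    by (simp add: chord_def algebra_simps)
  moreover have "chord d = net d d" using d chord_xL chord_xH by auto
  ultimately show "\<forall>y\<in>{0..1}. net d y \<le> net d d + chord_slope * (y - d)"
    using net_le_chord[OF d] by auto
qed (use d order in auto)

lemma slack_above_tangent:
  assumes "q \<in> {0<..<1}" "y \<in> {0..1}"
  shows "slack q + (chord_slope + \<kappa> * c' q) * (y - q) \<le> slack y"
proof -
  have "c' q * (y - q) \<le> c y - c q"
  proof (rule convex_on_imp_above_tangent[OF c_convex])
    show "(c has_real_derivative c' q) (at q within {0..1})"
      using c_deriv assms(1) by (auto intro: has_field_derivative_at_within)
  qed (use assms in auto)
  then have "\<kappa> * (c' q * (y - q)) \<le> \<kappa> * (c y - c q)"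
    using kappa_pos by (intro mult_left_mono) auto
  then show ?thesis by (simp add: slack_def chord_def algebra_simps)
qed

text \<open>By transfers_ordered, t xH Th1 and t xL Th2 are the smallest transfers in states Th1 and Th2,
  so only they can make lowering the transfers violate limited liability.\<close>
lemma no_improving_minorant:
  assumes minorant: "\<forall>x\<in>{0..1}. (1 - x) * w0 + x * w1 \<le> slack x"
    and pos: "0 < (1 - \<mu>) * w0 + \<mu> * w1"
    and "w0 \<le> 0 \<or> 0 < t xH Th1" "w1 \<le> 0 \<or> 0 < t xL Th2"
  shows False
proof -
  obtain e0 where e0: "0 < e0" "\<And>e. 0 \<le> e \<Longrightarrow> e \<le> e0 \<Longrightarrow> e * w0 \<le> t xH Th1"
    using small_multiple_le[of "t xH Th1" w0] transfers_nonneg assms(3) by auto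
  obtain e1 where e1: "0 < e1" "\<And>e. 0 \<le> e \<Longrightarrow> e \<le> e1 \<Longrightarrow> e * w1 \<le> t xL Th2"
    using small_multiple_le[of "t xL Th2" w1] transfers_nonneg assms(4) by auto
  define e where "e = min 1 (min e0 e1)"
  have e: "0 < e" "e \<le> 1" using e0 e1 by (auto simp: e_def)
  have "(1 - x) * (e * w0) + x * (e * w1) \<le> slack x" if x: "x \<in> {0..1}" for x
  proof -
    define W where "W = (1 - x) * w0 + x * w1"
    have "(1 - x) * (e * w0) + x * (e * w1) = e * W" by (simp add: W_def algebra_simps)
    also have "\<dots> \<le> slack x"
    proof (cases "0 \<le> W")
      case True
      then have "e * W \<le> W" using e by (simp add: mult_left_le_one_le)
      moreover have "W \<le> slack x" using minorant x by (simp add: W_def)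
      ultimately show ?thesis by linarith
    next
      case False
      then have "e * W \<le> 0" using e by (simp add: mult_nonneg_nonpos)
      then show ?thesis using slack_nonneg[OF x] by simp
    qed
    finally show ?thesis .
  qed
  moreover have "e * w0 \<le> t xH Th1" "e * w1 \<le> t xL Th2"
    using e0 e1 e by (auto simp: e_def)
  ultimately have "expected_transfer t F \<le> expected_transfer t F - ((1 - \<mu>) * (e * w0) + \<mu> * (e * w1))"
    using optimal[rule_format, OF implements_lowered] expected_transfer_lowered by simp
  moreover have "0 < e * ((1 - \<mu>) * w0 + \<mu> * w1)" using e pos by simp
  ultimately show False by (simp add: algebra_simps)
qed

lemma transfer_zero_if_slack_at_prior:
  assumes "0 < slack \<mu>"
  shows "t xL Th2 = 0 \<or> t xH Th1 = 0"
proof (rule ccontr)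
  define w0 where "w0 = slack \<mu> - (chord_slope + \<kappa> * c' \<mu>) * \<mu>"
  define w1 where "w1 = slack \<mu> + (chord_slope + \<kappa> * c' \<mu>) * (1 - \<mu>)"
  assume "\<not> (t xL Th2 = 0 \<or> t xH Th1 = 0)"
  then have "0 < t xL Th2" "0 < t xH Th1"
    using transfers_nonneg[of xL Th2] transfers_nonneg[of xH Th1] by auto
  moreover have "\<forall>x\<in>{0..1}. (1 - x) * w0 + x * w1 \<le> slack x"
    using slack_above_tangent[of \<mu>] order by (auto simp: w0_def w1_def algebra_simps)
  moreover have "(1 - \<mu>) * w0 + \<mu> * w1 = slack \<mu>"
    by (simp add: w0_def w1_def algebra_simps)
  ultimately show False
    using no_improving_minorant[of w0 w1] assms by auto
qed

lemma transfers_zero_if_slack_nowhere_zero: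
  assumes "\<forall>x\<in>{0..1}. slack x \<noteq> 0"
  shows "t xL Th2 = 0 \<and> t xH Th1 = 0"
proof -
  have pos: "\<forall>x\<in>{xL..xH}. 0 < slack x"
    using assms slack_nonneg order by (force simp: less_le)
  have cont: "continuous_on {a..b} (\<lambda>q. chord_slope + \<kappa> * c' q)" if "0 < a" "b < 1" for a b
    using that by (intro continuous_intros continuous_on_subset[OF c'_continuous]) auto
  have "\<forall>x\<in>{\<mu>..xH}. 0 < slack x" "\<forall>x\<in>{xL..\<mu>}. 0 < slack x"
    using pos order by auto
  note pos_right = this(1) and pos_left = this(2)
  have xL_pos: "0 < xL" and \<mu>_pos: "0 < \<mu>" and \<mu>_lt_1: "\<mu> < 1" and xH_lt_1: "xH < 1"
    using order by auto
  have one_zero: "t xL Th2 = 0 \<or> t xH Th1 = 0"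
    using pos order by (intro transfer_zero_if_slack_at_prior) auto
  show ?thesis
  proof (intro conjI; rule ccontr)
    assume "t xL Th2 \<noteq> 0"
    then have "0 < t xL Th2" "t xH Th1 = 0"
      using one_zero transfers_nonneg[of xL Th2] by auto
    then have s'_xH: "0 \<le> chord_slope + \<kappa> * c' xH"
      using chord_slope_eq_deriv[of xH] transfers_nonneg[of xH Th2] by simp
    obtain w0 w1 where "w0 \<le> 0" "\<forall>x\<in>{0..1}. (1 - x) * w0 + x * w1 \<le> slack x"
      "0 < (1 - \<mu>) * w0 + \<mu> * w1"
      by (rule affine_minorant_nonpos_at_0[where s = slack and s' = "\<lambda>q. chord_slope + \<kappa> * c' q",
            OF slack_above_tangent \<mu>_pos less_imp_le[OF order(3)] xH_lt_1 cont[OF \<mu>_pos xH_lt_1] s'_xH pos_right])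
    then show False
      using no_improving_minorant \<open>0 < t xL Th2\<close> by blast
  next
    assume "t xH Th1 \<noteq> 0"
    then have "0 < t xH Th1" "t xL Th2 = 0"
      using one_zero transfers_nonneg[of xH Th1] by auto
    then have s'_xL: "chord_slope + \<kappa> * c' xL \<le> 0"
      using chord_slope_eq_deriv[of xL] transfers_nonneg[of xL Th1] by simp
    obtain w0 w1 where "w1 \<le> 0" "\<forall>x\<in>{0..1}. (1 - x) * w0 + x * w1 \<le> slack x"
      "0 < (1 - \<mu>) * w0 + \<mu> * w1"
      by (rule affine_minorant_nonpos_at_1[where s = slack and s' = "\<lambda>q. chord_slope + \<kappa> * c' q",
            OF slack_above_tangent xL_pos less_imp_le[OF order(2)] \<mu>_lt_1 cont[OF xL_pos \<mu>_lt_1] s'_xL pos_left])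
    then show False
      using no_improving_minorant \<open>0 < t xH Th1\<close> by blast
  qed
qed

end

theorem proposition5:
  fixes \<kappa> v0 \<mu> xL xH :: real and c :: "real \<Rightarrow> real"
    and t :: "real \<Rightarrow> state \<Rightarrow> real"
  assumes kappa: "\<kappa> > 0" and v0: "v0 \<ge> 0"
    and c_nonneg: "\<forall>x\<in>{0..1}. c x \<ge> 0"
    and c_strict: "strictly_convex_on {0..1} c"
    and c_C2: "\<exists>c' c''. (\<forall>x\<in>{0<..<1}. (c has_real_derivative c' x) (at x) \<and>
                              (c' has_real_derivative c'' x) (at x)) \<and>
                         continuous_on {0<..<1} c''"
    and c_bdd: "bounded (c ` {0<..<1})"
    and c_mu: "c \<mu> = 0"
    and order: "0 < xL" "xL < \<mu>" "\<mu> < xH" "xH < 1"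
    and impl: "implements \<kappa> c v0 \<mu> {xL, xH} t (two_point xL xH \<mu>)"
    and opt: "\<forall>t'. implements \<kappa> c v0 \<mu> {xL, xH} t' (two_point xL xH \<mu>) \<longrightarrow>
                expected_transfer t (two_point xL xH \<mu>) \<le> expected_transfer t' (two_point xL xH \<mu>)"
  defines "\<alpha> \<equiv> t xL Th1" and "\<beta> \<equiv> t xL Th2" and "\<gamma> \<equiv> t xH Th1" and "\<delta> \<equiv> t xH Th2"
  defines "f \<equiv> (\<lambda>x. (1 - xL) * \<alpha> + xL * \<beta> - \<kappa> * c xL + (\<beta> - \<alpha> - \<kappa> * deriv c xL) * (x - xL))"
  defines "IC_binds \<equiv> (\<exists>x\<in>{0..1}. f x = v0 - \<kappa> * c x)"
  shows "(efficiently_implementable \<kappa> c v0 \<mu> (two_point xL xH \<mu>) \<and> IC_binds) \<or>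
         (\<not> efficiently_implementable \<kappa> c v0 \<mu> (two_point xL xH \<mu>) \<and>
            ((IC_binds \<and> \<beta> = 0) \<or> (IC_binds \<and> \<gamma> = 0) \<or> (\<not> IC_binds \<and> \<gamma> = 0 \<and> \<beta> = 0)))"
proof -
  obtain c' c'' where c': "\<forall>x\<in>{0<..<1}. (c has_real_derivative c' x) (at x)"
    and c'': "\<forall>x\<in>{0<..<1}. (c' has_real_derivative c'' x) (at x)"
    using c_C2 by blast
  interpret optimal_two_point_contract \<kappa> v0 \<mu> xL xH c t c'
  proof unfold_locales
    show "continuous_on {0<..<1} c" "continuous_on {0<..<1} c'"
      using c' c'' by (auto intro!: continuous_at_imp_continuous_on DERIV_isCont)
    show "convex_on {0..1} c"
      by (rule strictly_convex_on_imp_convex_on[OF c_strict]) simp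
  qed (use kappa order c_bdd c_mu impl opt c' in auto)
  have "deriv c xL = c' xL"
    using c' order by (intro DERIV_imp_deriv) auto
  then have "f = chord"
    using chord_slope_eq_deriv[of xL] by (auto simp: f_def chord_def net_def pay_def \<alpha>_def \<beta>_def)
  then have binds_iff: "IC_binds \<longleftrightarrow> (\<exists>x\<in>{0..1}. slack x = 0)"
    by (auto simp: IC_binds_def slack_def)
  show ?thesis
  proof (cases "chord \<mu> = v0")
    case True
    then show ?thesis
      using efficiently_implementable_iff binds_iff slack_prior order by auto
  next
    case False
    then have "0 < slack \<mu>"
      using slack_prior slack_nonneg[of \<mu>] order by auto
    then show ?thesis
      using False efficiently_implementable_iff binds_iff transfer_zero_if_slack_at_prior
        transfers_zero_if_slack_nowhere_zero
      by (auto simp: \<beta>_def \<gamma>_def)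
  qed
qed

end
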